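(* Let $\|\cdot\|_{Lo}$ be the Lorentz norm on $\mathbb{R}^p$ ($p\ge2$) and let $S_\star\subset\{1,\dots,p\}$ with $p\in S_\star$. Then for all $\beta\in\mathbb{R}^p$, $$\|\beta_{S_\star^{c}}\|_{Lo}\le\tfrac32\,\Omega^{S_\star^{c}}(\beta_{S_\star^{c}}),$$ i.e. the constant $C_{S_\star}$ can be taken equal to $3/2$.
   Context: The Lorentz cone is $\mathcal{A}:=\{a\in\mathbb{R}^p: a_j>0\ \forall j,\ a_p\ge\|(a_1,\dots,a_{p-1})\|_2\}$ and $\|\beta\|_{Lo}:=\inf_{a\in\mathcal{A}}\frac12\sum_{i=1}^p\big(\beta_i^2/a_i+a_i\big)$. For $S\ni p$, $\beta_{S^c}$ is the vector in $\mathbb{R}^p$ with entries $\beta_j1\{j\notin S\}$, $\mathcal{A}_{S^c}:=\{(a_j)_{j\in S^c}:a\in\mathcal{A}\}$, and $\Omega^{S^c}(\beta_{S^c}):=\inf_{a\in\mathcal{A}_{S^c}}\frac12\sum_{j\in S^c}\big(\beta_j^2/a_j+a_j\big)$. *)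

theory Defs
  imports "HOL-Analysis.Analysis"
begin

(* Vectors in R^p are represented as functions nat => real, with coordinates 1..p. *)

definition lorentz_cone :: "nat \<Rightarrow> (nat \<Rightarrow> real) set" where
  "lorentz_cone p = {a. (\<forall>j\<in>{1..p}. a j > 0) \<and>
                        a p \<ge> sqrt (\<Sum>j\<in>{1..<p}. (a j)^2)}"

definition lorentz_norm :: "nat \<Rightarrow> (nat \<Rightarrow> real) \<Rightarrow> real" where
  "lorentz_norm p \<beta> =
     Inf ((\<lambda>a. (1/2) * (\<Sum>i\<in>{1..p}. (\<beta> i)^2 / a i + a i)) ` lorentz_cone p)"

definition vec_restrict_compl :: "nat set \<Rightarrow> (nat \<Rightarrow> real) \<Rightarrow> (nat \<Rightarrow> real)" where
  "vec_restrict_compl S \<beta> = (\<lambda>j. if j \<notin> S then \<beta> j else 0)"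

definition cone_proj :: "nat \<Rightarrow> nat set \<Rightarrow> (nat \<Rightarrow> real) set" where
  "cone_proj p S = (\<lambda>a. restrict a ({1..p} - S)) ` lorentz_cone p"

definition omega_compl :: "nat \<Rightarrow> nat set \<Rightarrow> (nat \<Rightarrow> real) \<Rightarrow> real" where
  "omega_compl p S \<beta> =
     Inf ((\<lambda>a. (1/2) * (\<Sum>j\<in>{1..p} - S. (\<beta> j)^2 / a j + a j)) ` cone_proj p S)"

end

theory Submission
  imports Defs
begin

text \<open>Both sides are compared with the \<open>\<ell>\<^sub>1\<close>-norm \<open>M\<close> of \<open>\<beta>\<^sub>S\<^sub>c\<close>. Termwise AM-GM,
  \<open>|b| \<le> (b\<^sup>2/a + a)/2\<close>, gives \<open>M \<le> \<Omega>\<^sup>S\<^sup>c\<close>. For the Lorentz norm, take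
  \<open>a\<^sub>j = |\<beta>\<^sub>j| + \<epsilon>\<close> for \<open>j < p\<close> and \<open>a\<^sub>p = \<Sum>\<^sub>j<\<^sub>p a\<^sub>j\<close>, which lies in the cone since the
  \<open>\<ell>\<^sub>2\<close>-norm is dominated by the \<open>\<ell>\<^sub>1\<close>-norm. As \<open>\<beta>\<^sub>p = 0\<close>, the coordinates \<open>j < p\<close> contribute
  about \<open>M\<close> and \<open>a\<^sub>p\<close> contributes about \<open>M/2\<close>; letting \<open>\<epsilon> \<rightarrow> 0\<close> yields \<open>3M/2\<close>.\<close>

lemma abs_le_half_sq_div_add:
  fixes a b :: real
  assumes "a > 0"
  shows "\<bar>b\<bar> \<le> 1/2 * (b\<^sup>2 / a + a)"
proof -
  have "2 * \<bar>b\<bar> * a \<le> b\<^sup>2 + a\<^sup>2"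
    using sum_squares_bound[of "\<bar>b\<bar>" a] by (simp add: power2_eq_square algebra_simps)
  then show ?thesis
    using assms by (simp add: field_simps power2_eq_square)
qed

lemma sq_div_abs_add_le_abs:
  fixes b e :: real
  assumes "e \<ge> 0"
  shows "b\<^sup>2 / (\<bar>b\<bar> + e) \<le> \<bar>b\<bar>"
proof (cases "\<bar>b\<bar> + e = 0")
  case False
  then have "\<bar>b\<bar> + e > 0" using assms by linarith
  moreover have "b\<^sup>2 \<le> \<bar>b\<bar> * (\<bar>b\<bar> + e)"
    using assms by (simp add: power2_eq_square algebra_simps)
  ultimately show ?thesis by (simp add: divide_le_eq mult.commute)
qed simp

definition lorentz_witness :: "nat \<Rightarrow> (nat \<Rightarrow> real) \<Rightarrow> real \<Rightarrow> nat \<Rightarrow> real" where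
  "lorentz_witness p \<beta> e =
     (\<lambda>j. if j = p then (\<Sum>i\<in>{1..<p}. \<bar>\<beta> i\<bar> + e) else \<bar>\<beta> j\<bar> + e)"

lemma lorentz_witness_in_cone:
  assumes "p \<ge> 2" and "e > 0"
  shows "lorentz_witness p \<beta> e \<in> lorentz_cone p"
proof -
  let ?a = "lorentz_witness p \<beta> e"
  have below_p: "?a i = \<bar>\<beta> i\<bar> + e" if "i \<in> {1..<p}" for i
    using that by (simp add: lorentz_witness_def)
  have "0 < (\<Sum>i\<in>{1..<p}. \<bar>\<beta> i\<bar> + e)"
    using assms by (intro sum_pos) (auto intro: add_nonneg_pos)
  then have positive: "\<forall>j\<in>{1..p}. ?a j > 0"
    using assms(2) by (auto simp: lorentz_witness_def intro: add_nonneg_pos)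
  have "sqrt (\<Sum>j\<in>{1..<p}. (?a j)\<^sup>2) = L2_set ?a {1..<p}"
    by (simp add: L2_set_def)
  also have "\<dots> \<le> (\<Sum>j\<in>{1..<p}. ?a j)"
    using positive by (intro L2_set_le_sum) (auto intro: less_imp_le)
  also have "\<dots> = ?a p"
    by (simp add: lorentz_witness_def below_p)
  finally show ?thesis
    using positive by (simp add: lorentz_cone_def)
qed

lemma lorentz_norm_le:
  assumes "a \<in> lorentz_cone p"
  shows "lorentz_norm p \<beta> \<le> 1/2 * (\<Sum>i\<in>{1..p}. (\<beta> i)\<^sup>2 / a i + a i)"
  unfolding lorentz_norm_def
proof (rule cInf_lower)
  show "bdd_below ((\<lambda>a. 1/2 * (\<Sum>i\<in>{1..p}. (\<beta> i)\<^sup>2 / a i + a i)) ` lorentz_cone p)"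
  proof (rule bdd_belowI[where m = 0], clarify)
    fix a assume "a \<in> lorentz_cone p"
    then have "a i > 0" if "i \<in> {1..p}" for i
      using that by (simp add: lorentz_cone_def)
    then have "0 \<le> (\<beta> i)\<^sup>2 / a i + a i" if "i \<in> {1..p}" for i
      using that by (simp add: add_nonneg_nonneg less_imp_le)
    then show "0 \<le> 1/2 * (\<Sum>i\<in>{1..p}. (\<beta> i)\<^sup>2 / a i + a i)"
      by (intro mult_nonneg_nonneg sum_nonneg) auto
  qed
qed (use assms in blast)

lemma lorentz_norm_le_l1_add:
  assumes "p \<ge> 2" and "\<beta> p = 0" and "e > 0"
  shows "lorentz_norm p \<beta> \<le> 3/2 * (\<Sum>i\<in>{1..<p}. \<bar>\<beta> i\<bar>) + real (p - 1) * e"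
proof -
  let ?a = "lorentz_witness p \<beta> e"
  define M where "M = (\<Sum>i\<in>{1..<p}. \<bar>\<beta> i\<bar>)"
  have split_last: "{1..p} = insert p {1..<p}"
    using assms(1) by auto
  have below_p: "(\<Sum>i\<in>{1..<p}. (\<beta> i)\<^sup>2 / ?a i + ?a i) \<le> (\<Sum>i\<in>{1..<p}. 2 * \<bar>\<beta> i\<bar> + e)"
    using sq_div_abs_add_le_abs[of e] assms(3)
    by (intro sum_mono) (fastforce simp: lorentz_witness_def)
  have at_p: "?a p = M + real (p - 1) * e"
    by (simp add: lorentz_witness_def sum.distrib M_def)
  have "lorentz_norm p \<beta> \<le> 1/2 * (\<Sum>i\<in>{1..p}. (\<beta> i)\<^sup>2 / ?a i + ?a i)"
    by (rule lorentz_norm_le[OF lorentz_witness_in_cone[OF assms(1,3)]])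
  also have "\<dots> = 1/2 * ((\<Sum>i\<in>{1..<p}. (\<beta> i)\<^sup>2 / ?a i + ?a i) + ?a p)"
    unfolding split_last using assms(2) by simp
  also have "\<dots> \<le> 1/2 * ((\<Sum>i\<in>{1..<p}. 2 * \<bar>\<beta> i\<bar> + e) + ?a p)"
    using below_p by simp
  also have "\<dots> = 3/2 * M + real (p - 1) * e"
    by (simp add: at_p sum.distrib sum_distrib_left[symmetric] M_def)
  finally show ?thesis by (simp add: M_def)
qed

lemma lorentz_norm_le_three_halves_l1:
  assumes "p \<ge> 2" and "\<beta> p = 0"
  shows "lorentz_norm p \<beta> \<le> 3/2 * (\<Sum>i\<in>{1..<p}. \<bar>\<beta> i\<bar>)"
proof (rule field_le_epsilon)
  fix d :: real
  assume "d > 0"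
  then have "real (p - 1) * (d / real p) \<le> d"
    using assms(1) by (simp add: field_simps)
  then show "lorentz_norm p \<beta> \<le> 3/2 * (\<Sum>i\<in>{1..<p}. \<bar>\<beta> i\<bar>) + d"
    using lorentz_norm_le_l1_add[of p \<beta> "d / real p"] \<open>d > 0\<close> assms by simp
qed

lemma l1_le_omega_compl:
  assumes "p \<ge> 2"
  shows "(\<Sum>j\<in>{1..p} - S. \<bar>\<gamma> j\<bar>) \<le> omega_compl p S \<gamma>"
  unfolding omega_compl_def
proof (rule cInf_greatest)
  show "(\<lambda>a. 1/2 * (\<Sum>j\<in>{1..p} - S. (\<gamma> j)\<^sup>2 / a j + a j)) ` cone_proj p S \<noteq> {}"
    using lorentz_witness_in_cone[OF assms, of 1] unfolding cone_proj_def by auto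
next
  fix x
  assume "x \<in> (\<lambda>a. 1/2 * (\<Sum>j\<in>{1..p} - S. (\<gamma> j)\<^sup>2 / a j + a j)) ` cone_proj p S"
  then obtain a where a: "a \<in> lorentz_cone p"
    and x: "x = (\<Sum>j\<in>{1..p} - S. 1/2 * ((\<gamma> j)\<^sup>2 / a j + a j))"
    unfolding cone_proj_def by (auto simp: sum_distrib_left)
  have "(\<Sum>j\<in>{1..p} - S. \<bar>\<gamma> j\<bar>) \<le> (\<Sum>j\<in>{1..p} - S. 1/2 * ((\<gamma> j)\<^sup>2 / a j + a j))"
    using a by (intro sum_mono abs_le_half_sq_div_add) (auto simp: lorentz_cone_def)
  then show "(\<Sum>j\<in>{1..p} - S. \<bar>\<gamma> j\<bar>) \<le> x"
    by (simp add: x)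
qed

lemma sum_abs_vec_restrict_compl:
  assumes "p \<in> S"
  shows "(\<Sum>i\<in>{1..<p}. \<bar>vec_restrict_compl S \<beta> i\<bar>) = (\<Sum>j\<in>{1..p} - S. \<bar>vec_restrict_compl S \<beta> j\<bar>)"
proof (rule sum.mono_neutral_right)
  show "{1..p} - S \<subseteq> {1..<p}"
    using assms by (auto simp: order.order_iff_strict)
qed (auto simp: vec_restrict_compl_def)

theorem lemma13:
  fixes p :: nat and S :: "nat set" and \<beta> :: "nat \<Rightarrow> real"
  assumes "p \<ge> 2" and "S \<subseteq> {1..p}" and "p \<in> S"
  shows "lorentz_norm p (vec_restrict_compl S \<beta>)
           \<le> 3/2 * omega_compl p S (vec_restrict_compl S \<beta>)"
proof -
  let ?\<gamma> = "vec_restrict_compl S \<beta>"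
  have "?\<gamma> p = 0"
    using assms(3) by (simp add: vec_restrict_compl_def)
  then have "lorentz_norm p ?\<gamma> \<le> 3/2 * (\<Sum>i\<in>{1..<p}. \<bar>?\<gamma> i\<bar>)"
    by (rule lorentz_norm_le_three_halves_l1[OF assms(1)])
  also have "\<dots> = 3/2 * (\<Sum>j\<in>{1..p} - S. \<bar>?\<gamma> j\<bar>)"
    unfolding sum_abs_vec_restrict_compl[OF assms(3)] ..
  also have "\<dots> \<le> 3/2 * omega_compl p S ?\<gamma>"
    using l1_le_omega_compl[OF assms(1)] by simp
  finally show ?thesis .
qed

end
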